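(* Let $I$ be a compact interval and $f:I\to\mathcal{K}(\mathbb{R})$ a continuous set-valued function such that $\dim_A(\mathcal{G}(f))>1$. Then $\dim_A\Delta(\mathcal{G}(f))=1$.
   Context: $\mathcal{K}(\mathbb{R})$: non-empty compact subsets of $\mathbb{R}$ with the Hausdorff distance. $\mathcal{G}(f)=\{(x,y)\in I\times\mathbb{R}:y\in f(x)\}\subseteq\mathbb{R}^2$, and $\Delta(\mathcal{G}(f))=\{|x-x_*|+|y-y_*|:x,x_*\in I,\ y\in f(x),\ y_*\in f(x_* )\}$. $\dim_A$ denotes Assouad dimension. *)

theory Defs
  imports "HOL-Analysis.Analysis"
begin

definition hausdorff_dist :: "'a::metric_space set \<Rightarrow> 'a set \<Rightarrow> real" where
  "hausdorff_dist A B = max (SUP a\<in>A. infdist a B) (SUP b\<in>B. infdist b A)"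

definition hausdorff_continuous_on :: "real set \<Rightarrow> (real \<Rightarrow> real set) \<Rightarrow> bool" where
  "hausdorff_continuous_on I f \<longleftrightarrow>
     (\<forall>x\<in>I. \<forall>e>0. \<exists>d>0. \<forall>y\<in>I. \<bar>y - x\<bar> < d \<longrightarrow> hausdorff_dist (f y) (f x) < e)"

definition assouad_dim :: "'a::euclidean_space set \<Rightarrow> real" where
  "assouad_dim F = Inf {s. s \<ge> 0 \<and> (\<exists>C>0. \<forall>x\<in>F. \<forall>R r. 0 < r \<longrightarrow> r < R \<longrightarrow>
      (\<exists>A. finite A \<and> F \<inter> ball x R \<subseteq> (\<Union>a\<in>A. cball a r) \<and>
           real (card A) \<le> C * (R / r) powr s))}"

definition graph_sv :: "real set \<Rightarrow> (real \<Rightarrow> real set) \<Rightarrow> (real \<times> real) set" where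
  "graph_sv I f = {(x, y). x \<in> I \<and> y \<in> f x}"

definition l1_distance_set :: "(real \<times> real) set \<Rightarrow> real set" where
  "l1_distance_set G = {\<bar>x - x'\<bar> + \<bar>y - y'\<bar> | x y x' y'. (x, y) \<in> G \<and> (x', y') \<in> G}"

end

theory Submission
  imports Defs
begin

text \<open>A subset of an isometric copy of the line has Assouad dimension at most 1, since a ball of
  radius \<open>R\<close> on a line is covered by \<open>2R/r\<close> balls of radius \<open>r\<close>.  If a set of reals contains an
  interval, its dimension is exactly 1: \<open>N\<close> points of the interval with spacing \<open>3r\<close> lie in a
  ball of radius \<open>3Nr\<close> and no \<open>r\<close>-ball contains two of them, so \<open>N \<le> C (3N)\<^sup>s\<close> for all \<open>N\<close>,
  forcing \<open>s \<ge> 1\<close>.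
  If \<open>a = b\<close>, the graph lies on a vertical line, which the hypothesis \<open>dim\<^sub>A > 1\<close> excludes.  If
  \<open>a < b\<close>, fix \<open>y\<^sub>0 \<in> f(a)\<close>: the map \<open>x \<mapsto> (x - a) + d(y\<^sub>0, f(x))\<close> is continuous, vanishes at \<open>a\<close>,
  is at least \<open>b - a\<close> at \<open>b\<close>, and its values are \<open>\<ell>\<^sub>1\<close>-distances from \<open>(a, y\<^sub>0)\<close> to points of the
  graph.  So the distance set contains the interval \<open>[0, b - a]\<close>.\<close>

definition assouad_bound :: "'a::metric_space set \<Rightarrow> real \<Rightarrow> real \<Rightarrow> bool" where
  "assouad_bound F C s \<longleftrightarrow> (\<forall>x\<in>F. \<forall>R r. 0 < r \<longrightarrow> r < R \<longrightarrow>
     (\<exists>A. finite A \<and> F \<inter> ball x R \<subseteq> (\<Union>a\<in>A. cball a r) \<and> real (card A) \<le> C * (R / r) powr s))"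

lemma assouad_dim_altdef: "assouad_dim F = Inf {s. 0 \<le> s \<and> (\<exists>C>0. assouad_bound F C s)}"
  by (simp add: assouad_dim_def assouad_bound_def)

lemma assouad_dim_le:
  assumes "0 \<le> s" "0 < C" "assouad_bound F C s"
  shows "assouad_dim F \<le> s"
  unfolding assouad_dim_altdef using assms by (intro cInf_lower bdd_belowI[of _ 0]) auto

lemma cover_ball_real:
  fixes c R r :: real
  assumes "0 < r" "r < R"
  obtains A where "finite A" "ball c R \<subseteq> (\<Union>a\<in>A. cball a r)" "real (card A) \<le> 2 * (R / r)"
proof
  define n where "n = nat \<lceil>R / r\<rceil>"
  define A where "A = (\<lambda>k::nat. c - R + r + 2 * r * real k) ` {..<n}"
  have n: "R / r \<le> real n" "real n \<le> R / r + 1"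
    using assms by (simp_all add: n_def)
  show "finite A" by (simp add: A_def)
  have "real (card A) \<le> real n"
    unfolding A_def using card_image_le[of "{..<n}"] by (simp add: of_nat_le_iff)
  also have "\<dots> \<le> 2 * (R / r)"
    using n assms by (simp add: field_simps)
  finally show "real (card A) \<le> 2 * (R / r)" .
  show "ball c R \<subseteq> (\<Union>a\<in>A. cball a r)"
  proof
    fix t assume "t \<in> ball c R"
    then have t: "c - R < t" "t < c + R" by (auto simp: dist_real_def)
    define v where "v = (t - (c - R)) / (2 * r)"
    define k where "k = nat \<lfloor>v\<rfloor>"
    have "0 \<le> v" using t assms by (simp add: v_def)
    then have kv: "real k \<le> v" "v < real k + 1" by (simp_all add: k_def)
    have "v < (2 * R) / (2 * r)"
      unfolding v_def using t assms by (intro divide_strict_right_mono) auto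
    then have "v < R / r" by simp
    then have "k < n" using kv n by linarith
    have "2 * r * real k \<le> 2 * r * v" "2 * r * v < 2 * r * (real k + 1)"
      using kv assms by simp_all
    moreover have "2 * r * v = t - (c - R)" using assms by (simp add: v_def)
    ultimately have "dist t (c - R + r + 2 * r * real k) \<le> r"
      by (simp add: dist_real_def algebra_simps)
    with \<open>k < n\<close> show "t \<in> (\<Union>a\<in>A. cball a r)"
      unfolding A_def by (auto simp: dist_commute)
  qed
qed

lemma assouad_bound_isometric_line:
  fixes e :: "real \<Rightarrow> 'a::metric_space"
  assumes isometry: "\<And>u v. dist (e u) (e v) = dist u v" and "F \<subseteq> range e"
  shows "assouad_bound F 2 1"
  unfolding assouad_bound_def
proof (intro ballI allI impI)
  fix x and R r :: real assume "x \<in> F" and r: "0 < r" "r < R"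
  then obtain t where t: "x = e t" using assms(2) by blast
  obtain A where A: "finite A" "ball t R \<subseteq> (\<Union>a\<in>A. cball a r)" "real (card A) \<le> 2 * (R / r)"
    using cover_ball_real[OF r] .
  have "F \<inter> ball x R \<subseteq> (\<Union>a\<in>e ` A. cball a r)"
  proof
    fix y assume y: "y \<in> F \<inter> ball x R"
    then obtain u where u: "y = e u" using assms(2) by blast
    then have "u \<in> ball t R" using y t isometry by simp
    then obtain a where "a \<in> A" "dist a u \<le> r" using A(2) by auto
    then show "y \<in> (\<Union>a\<in>e ` A. cball a r)" using u isometry by auto
  qed
  moreover have "real (card (e ` A)) \<le> 2 * (R / r) powr 1"
    using A(3) card_image_le[OF A(1), of e] r by simp
  ultimately show "\<exists>A. finite A \<and> F \<inter> ball x R \<subseteq> (\<Union>a\<in>A. cball a r) \<and>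
      real (card A) \<le> 2 * (R / r) powr 1"
    using A(1) by blast
qed

lemma assouad_dim_isometric_line_le_one:
  fixes e :: "real \<Rightarrow> 'a::euclidean_space"
  assumes "\<And>u v. dist (e u) (e v) = dist u v" "F \<subseteq> range e"
  shows "assouad_dim F \<le> 1"
  using assouad_bound_isometric_line[OF assms] by (rule assouad_dim_le[rotated 2]) auto

lemma card_le_card_cover_separated:
  fixes P :: "'a::metric_space set"
  assumes "finite A" "P \<subseteq> (\<Union>a\<in>A. cball a r)"
    and separated: "\<And>p q. p \<in> P \<Longrightarrow> q \<in> P \<Longrightarrow> p \<noteq> q \<Longrightarrow> 2 * r < dist p q"
  shows "card P \<le> card A"
proof -
  define g where "g p = (SOME a. a \<in> A \<and> p \<in> cball a r)" for p
  have g: "g p \<in> A \<and> dist p (g p) \<le> r" if p: "p \<in> P" for p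
  proof -
    obtain a where "a \<in> A \<and> p \<in> cball a r" using p assms(2) by blast
    then have "g p \<in> A \<and> p \<in> cball (g p) r" unfolding g_def by (rule someI)
    then show ?thesis by (simp add: dist_commute)
  qed
  have "inj_on g P"
  proof (rule inj_onI)
    fix p q assume pq: "p \<in> P" "q \<in> P" "g p = g q"
    then have "dist p q \<le> 2 * r"
      using g[OF pq(1)] g[OF pq(2)] dist_triangle[of p q "g p"] by (simp add: dist_commute)
    then show "p = q" using separated[OF pq(1,2)] by (meson not_less)
  qed
  then show ?thesis using g assms(1) by (intro card_inj_on_le) auto
qed

lemma sublinear_powr_less_nat:
  fixes C K s :: real
  assumes "s < 1" "0 \<le> K"
  obtains N :: nat where "0 < N" "C * (K * real N) powr s < real N"
proof -
  have "((\<lambda>N. C * K powr s * real N powr (s - 1)) \<longlongrightarrow> 0) sequentially"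
    using assms by (intro tendsto_mult_right_zero tendsto_neg_powr filterlim_real_sequentially) simp_all
  then have "\<forall>\<^sub>F N in sequentially. C * K powr s * real N powr (s - 1) < 1"
    by (rule order_tendstoD) simp
  then obtain M where M: "\<forall>N\<ge>M. C * K powr s * real N powr (s - 1) < 1"
    unfolding eventually_sequentially by blast
  define N where "N = Suc M"
  have "0 < N" and N: "C * K powr s * real N powr (s - 1) < 1"
    using M[rule_format, of N] by (simp_all add: N_def)
  have "C * (K * real N) powr s = C * K powr s * real N powr (s - 1) * real N"
    using \<open>0 < N\<close> assms(2) by (simp add: powr_mult powr_diff)
  also have "\<dots> < real N" using N \<open>0 < N\<close> by simp
  finally show thesis using \<open>0 < N\<close> that by blast
qed

lemma card_cover_interval_ge:
  fixes c r :: real and N :: nat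
  assumes "0 < r" "finite A" "{c..<c + 3 * r * N} \<subseteq> (\<Union>a\<in>A. cball a r)"
  shows "N \<le> card A"
proof -
  define P where "P = (\<lambda>k. c + 3 * r * real k) ` {..<N}"
  have "inj_on (\<lambda>k. c + 3 * r * real k) {..<N}"
    using assms(1) by (intro inj_onI) simp
  then have card_P: "card P = N" by (simp add: P_def card_image)
  have "card P \<le> card A"
  proof (rule card_le_card_cover_separated[OF assms(2)])
    have "c + 3 * r * real k \<in> {c..<c + 3 * r * N}" if "k < N" for k
      using assms(1) that by simp
    then show "P \<subseteq> (\<Union>a\<in>A. cball a r)" using assms(3) by (auto simp: P_def)
    fix p q assume "p \<in> P" "q \<in> P" "p \<noteq> q"
    then obtain i j :: nat where ij: "p = c + 3 * r * real i" "q = c + 3 * r * real j" "i \<noteq> j"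
      by (auto simp: P_def)
    then have "1 \<le> \<bar>real i - real j\<bar>" by linarith
    then have "3 * r \<le> 3 * r * \<bar>real i - real j\<bar>"
      using assms(1) mult_left_mono[of 1 _ "3 * r"] by simp
    also have "\<dots> = dist p q"
      using assms(1) ij(1,2) by (simp add: dist_real_def abs_mult right_diff_distrib[symmetric])
    finally show "2 * r < dist p q" using assms(1) by linarith
  qed
  with card_P show ?thesis by simp
qed

lemma assouad_bound_interval_exponent_ge_one:
  fixes F :: "real set"
  assumes "c < d" "{c..d} \<subseteq> F" and bound: "assouad_bound F C s"
  shows "1 \<le> s"
proof (rule ccontr)
  assume "\<not> 1 \<le> s"
  then have "s < 1" by simp
  then obtain N :: nat where N: "0 < N" "C * (3 * real N) powr s < real N"
    by (rule sublinear_powr_less_nat[where K = 3]) simp_all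
  define L where "L = d - c"
  define r where "r = L / (3 * N)"
  have "0 < L" using assms(1) by (simp add: L_def)
  moreover have "L < 3 * N * L"
    using \<open>0 < L\<close> N(1) mult_strict_right_mono[of 1 "3 * real N" L] by simp
  ultimately have r: "0 < r" "r < L" and rN: "3 * r * N = L"
    using N(1) by (simp_all add: r_def field_simps)
  have "c \<in> F" using assms(1,2) by auto
  then obtain A where A: "finite A" "F \<inter> ball c L \<subseteq> (\<Union>a\<in>A. cball a r)"
      "real (card A) \<le> C * (L / r) powr s"
    using bound[unfolded assouad_bound_def, rule_format, OF _ r] by blast
  have "{c..<c + 3 * r * N} \<subseteq> F \<inter> ball c L"
    using assms(2) rN by (auto simp: dist_real_def L_def)
  then have "N \<le> card A" using A(1,2) r(1) by (intro card_cover_interval_ge) auto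
  moreover have "L / r = 3 * N" using rN r by (simp add: field_simps)
  ultimately show False using A(3) N(2) by simp
qed

lemma assouad_dim_eq_one_if_interval:
  fixes F :: "real set"
  assumes "c < d" "{c..d} \<subseteq> F"
  shows "assouad_dim F = 1"
  unfolding assouad_dim_altdef
proof (rule cInf_eq_minimum)
  have "assouad_bound F 2 1" by (rule assouad_bound_isometric_line[of id]) auto
  then show "1 \<in> {s. 0 \<le> s \<and> (\<exists>C>0. assouad_bound F C s)}" by (auto intro!: exI[of _ 2])
next
  fix s assume "s \<in> {s. 0 \<le> s \<and> (\<exists>C>0. assouad_bound F C s)}"
  then obtain C where "assouad_bound F C s" by blast
  then show "1 \<le> s" by (rule assouad_bound_interval_exponent_ge_one[OF assms])
qed

lemma infdist_le_infdist_add_SUP: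
  fixes A B :: "'a::metric_space set"
  assumes "compact B" "B \<noteq> {}"
  shows "infdist y A \<le> infdist y B + (SUP b\<in>B. infdist b A)"
proof -
  have "bdd_above ((\<lambda>b. infdist b A) ` B)"
    using assms(1) by (intro bounded_imp_bdd_above compact_imp_bounded
        compact_continuous_image continuous_on_infdist continuous_on_id)
  then have "infdist y A - (SUP b\<in>B. infdist b A) \<le> dist y b" if "b \<in> B" for b
    using that infdist_triangle[of y A b] cSUP_upper[of b B "\<lambda>b. infdist b A"] by linarith
  then have "infdist y A - (SUP b\<in>B. infdist b A) \<le> infdist y B"
    using assms(2) by (simp add: infdist_notempty cINF_greatest)
  then show ?thesis by linarith
qed

lemma infdist_diff_le_hausdorff_dist:
  fixes A B :: "'a::metric_space set"
  assumes "compact A" "A \<noteq> {}" "compact B" "B \<noteq> {}"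
  shows "\<bar>infdist y A - infdist y B\<bar> \<le> hausdorff_dist A B"
  using infdist_le_infdist_add_SUP[of B y A] infdist_le_infdist_add_SUP[of A y B] assms
  unfolding hausdorff_dist_def by linarith

lemma continuous_on_infdist_hausdorff_continuous:
  assumes cont: "hausdorff_continuous_on I f" and f: "\<forall>x\<in>I. f x \<noteq> {} \<and> compact (f x)"
  shows "continuous_on I (\<lambda>x. infdist y (f x))"
  unfolding continuous_on_iff
proof (intro ballI allI impI)
  fix x e :: real assume x: "x \<in> I" and "0 < e"
  then obtain d where "0 < d" and d: "\<forall>x'\<in>I. \<bar>x' - x\<bar> < d \<longrightarrow> hausdorff_dist (f x') (f x) < e"
    using cont unfolding hausdorff_continuous_on_def by blast
  have "dist (infdist y (f x')) (infdist y (f x)) < e" if "x' \<in> I" "dist x' x < d" for x'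
    using infdist_diff_le_hausdorff_dist[of "f x'" "f x" y] d f x that
    by (fastforce simp: dist_real_def)
  then show "\<exists>d>0. \<forall>x'\<in>I. dist x' x < d \<longrightarrow> dist (infdist y (f x')) (infdist y (f x)) < e"
    using \<open>0 < d\<close> by blast
qed

lemma interval_subset_l1_distance_set_graph:
  assumes "a \<le> b" and f: "\<forall>x\<in>{a..b}. f x \<noteq> {} \<and> compact (f x)"
    and cont: "hausdorff_continuous_on {a..b} f"
  shows "{0..b - a} \<subseteq> l1_distance_set (graph_sv {a..b} f)"
proof
  fix t assume t: "t \<in> {0..b - a}"
  obtain y0 where y0: "y0 \<in> f a" using f assms(1) by fastforce
  define g where "g x = (x - a) + infdist y0 (f x)" for x
  have "continuous_on {a..b} g"
    unfolding g_def by (intro continuous_intros continuous_on_infdist_hausdorff_continuous cont f)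
  moreover have "g a = 0" "b - a \<le> g b" using y0 by (simp_all add: g_def infdist_nonneg)
  ultimately obtain x where x: "x \<in> {a..b}" "g x = t"
    using IVT'[of g a t b] t assms(1) by auto
  have "closed (f x)" "f x \<noteq> {}" using f x(1) by (auto intro: compact_imp_closed)
  then obtain y where y: "y \<in> f x" "infdist y0 (f x) = dist y0 y"
    by (rule infdist_attains_inf)
  have "t = \<bar>x - a\<bar> + \<bar>y - y0\<bar>"
    using x y by (simp add: g_def dist_real_def abs_minus_commute)
  moreover have "(x, y) \<in> graph_sv {a..b} f" "(a, y0) \<in> graph_sv {a..b} f"
    using x(1) y(1) y0 assms(1) by (simp_all add: graph_sv_def)
  ultimately show "t \<in> l1_distance_set (graph_sv {a..b} f)"
    unfolding l1_distance_set_def by (intro CollectI exI[of _ x] exI[of _ y] exI[of _ a] exI[of _ y0]) simp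
qed

theorem theorem4p4:
  fixes a b :: real and f :: "real \<Rightarrow> real set"
  assumes "a \<le> b"
    and "\<forall>x\<in>{a..b}. f x \<noteq> {} \<and> compact (f x)"
    and "hausdorff_continuous_on {a..b} f"
    and "assouad_dim (graph_sv {a..b} f) > 1"
  shows "assouad_dim (l1_distance_set (graph_sv {a..b} f)) = 1"
proof -
  have "a \<noteq> b"
  proof
    assume "a = b"
    then have "graph_sv {a..b} f \<subseteq> range (Pair a)" by (auto simp: graph_sv_def)
    then have "assouad_dim (graph_sv {a..b} f) \<le> 1"
      by (rule assouad_dim_isometric_line_le_one[rotated]) (simp add: dist_Pair_Pair)
    with assms(4) show False by simp
  qed
  with assms(1) have "0 < b - a" by simp
  then show ?thesis
    using interval_subset_l1_distance_set_graph[OF assms(1-3)] by (rule assouad_dim_eq_one_if_interval)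
qed

end
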